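(* In the same situation, the coefficients $\varepsilon_i$ ($i\ge a+1$) satisfy $ord(\varepsilon_i)\ge i+\min_{2\le j\le a}\{ord(\delta_j)-j\}$.
   Context: Setting: $a\ge2$, $c_i(N)\in t^i\mathbb C[[t]]$, $\delta_i\in t^{i+1}\mathbb C[[t]]$, $c_i(N+1)=c_i(N)+\delta_i$ ($2\le i\le a$), and $\delta_i'$ ($2\le i\le a$), $\varepsilon_i$ ($i>a$) are the unique elements of $\mathbb C[[t]]$ such that $s(N+1)=s-\frac1a\sum_{i=2}^a\delta_i's^{1-i}+\sum_{i>a}\varepsilon_is^{1-i}$ satisfies $s(N+1)^a+\sum_{k=2}^ac_k(N+1)s(N+1)^{a-k}=s^a+\sum_{k=2}^ac_k(N)s^{a-k}$. For $\delta\in\mathbb C[[t]]$, $ord(\delta)$ is the largest $k$ with $t^k\mid\delta$. *)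

theory Defs
  imports "HOL-Computational_Algebra.Formal_Laurent_Series" "HOL-Library.Extended_Nat"
begin

text \<open>Ambient ring: formal Laurent series in s^{-1} (the variable fls_X plays the role of
  s^{-1}, so s = fls_X_inv) with coefficients in C[[t]] = complex fps.\<close>

type_synonym cfps = "complex fps"

definition sv :: "cfps fls" where "sv = fls_X_inv"

definition spow1m :: "nat \<Rightarrow> cfps fls" where "spow1m i = fls_X ^ (i - 1)"

text \<open>The infinite tail  sum_{i>a} eps_i s^(1-i).\<close>
definition tail_sum :: "nat \<Rightarrow> (nat \<Rightarrow> cfps) \<Rightarrow> cfps fls" where
  "tail_sum a eps = fls_X_inv * fps_to_fls (Abs_fps (\<lambda>i. if a < i then eps i else 0))"

definition s_next :: "nat \<Rightarrow> (nat \<Rightarrow> cfps) \<Rightarrow> (nat \<Rightarrow> cfps) \<Rightarrow> cfps fls" where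
  "s_next a d' eps = sv
     - fls_const (fps_const (1 / of_nat a)) * (\<Sum>i=2..a. fls_const (d' i) * spow1m i)
     + tail_sum a eps"

definition monic_expr :: "nat \<Rightarrow> (nat \<Rightarrow> cfps) \<Rightarrow> cfps fls \<Rightarrow> cfps fls" where
  "monic_expr a c x = x ^ a + (\<Sum>k=2..a. fls_const (c k) * x ^ (a - k))"

definition ord :: "cfps \<Rightarrow> enat" where
  "ord d = (if d = 0 then \<infinity> else enat (subdegree d))"

end

theory Submission
  imports Defs
begin

text \<open>Give both \<open>t\<close> and \<open>s\<close> weight 1. Writing \<open>s(N+1) = s + u\<close> and \<open>P\<close> for the monic
  polynomial with coefficients \<open>c_k + \<delta>_k\<close>, the hypothesis says that \<open>P(s + u) - P(s)\<close> equals
  \<open>-\<Sum> \<delta>_k s^(a-k)\<close>, which has weight at least \<open>a + M\<close> when every \<open>\<delta>_k\<close> has weight at least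
  \<open>k + M\<close>. On the other hand \<open>P(s + u) - P(s) = u \<cdot> Q\<close> where \<open>Q\<close> has weight at least \<open>a - 1\<close>
  and leading term \<open>a s^(a-1)\<close>, whose coefficient is a unit. Comparing coefficients of \<open>s^(-k)\<close> one at a
  time (induction on \<open>k\<close>, splitting off the part of \<open>u\<close> already controlled) shows that \<open>u\<close> has
  weight at least \<open>M + 1\<close>, i.e. \<open>t^(i+M)\<close> divides \<open>\<epsilon>_i\<close>. Taking \<open>M\<close> to be the minimum of
  \<open>ord(\<delta>_j) - j\<close> gives the theorem.\<close>

unbundle fps_syntax

text \<open>Since \<open>fls_X\<close> stands for \<open>s\<^sup>-\<^sup>1\<close>, the coefficient \<open>F $$ n\<close> is that of \<open>s^(-n)\<close>; \<open>weight_ge F r\<close> says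
  that every monomial \<open>t^m s^(-n)\<close> of \<open>F\<close> has \<open>m - n \<ge> r\<close>.\<close>

definition weight_ge :: "'a::comm_ring_1 fps fls \<Rightarrow> int \<Rightarrow> bool" where
  "weight_ge F r \<longleftrightarrow> (\<forall>n. fps_X ^ nat (r + n) dvd F $$ n)"

definition lowest_coeff_at :: "'a::zero fls \<Rightarrow> int \<Rightarrow> 'a \<Rightarrow> bool" where
  "lowest_coeff_at F d e \<longleftrightarrow> (\<forall>n<d. F $$ n = 0) \<and> F $$ d = e"

lemma weight_ge_add: "weight_ge F r \<Longrightarrow> weight_ge G r \<Longrightarrow> weight_ge (F + G) r"
  by (simp add: weight_ge_def)

lemma weight_ge_diff: "weight_ge F r \<Longrightarrow> weight_ge G r \<Longrightarrow> weight_ge (F - G) r"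
  by (simp add: weight_ge_def)

lemma weight_ge_uminus: "weight_ge F r \<Longrightarrow> weight_ge (- F) r"
  by (simp add: weight_ge_def)

lemma weight_ge_zero: "weight_ge 0 r"
  by (simp add: weight_ge_def)

lemma weight_ge_sum: "(\<And>x. x \<in> A \<Longrightarrow> weight_ge (f x) r) \<Longrightarrow> weight_ge (\<Sum>x\<in>A. f x) r"
  by (induction A rule: infinite_finite_induct) (auto simp: weight_ge_zero weight_ge_add)

lemma weight_ge_mono: "weight_ge F r \<Longrightarrow> q \<le> r \<Longrightarrow> weight_ge F q"
  unfolding weight_ge_def by (meson dvd_trans le_imp_power_dvd nat_mono add_right_mono)

lemma weight_ge_const: "fps_X ^ nat r dvd e \<Longrightarrow> weight_ge (fls_const e) r"
  by (simp add: weight_ge_def)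

lemma weight_ge_X_inv: "weight_ge fls_X_inv 1"
  by (simp add: weight_ge_def)

lemma weight_ge_one: "weight_ge 1 0"
  by (simp add: weight_ge_def)

lemma weight_ge_mult:
  assumes "weight_ge F r" "weight_ge G q"
  shows "weight_ge (F * G) (r + q)"
  unfolding weight_ge_def
proof
  fix n
  have "fps_X ^ nat (r + q + n) dvd F $$ i * G $$ (n - i)" for i
  proof -
    have "fps_X ^ nat (r + i) * fps_X ^ nat (q + (n - i)) dvd F $$ i * G $$ (n - i)"
      using assms by (intro mult_dvd_mono) (simp_all add: weight_ge_def)
    moreover have "fps_X ^ nat (r + q + n) dvd fps_X ^ nat (r + i) * fps_X ^ nat (q + (n - i))"
      unfolding power_add[symmetric] by (rule le_imp_power_dvd) linarith
    ultimately show ?thesis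
      using dvd_trans by blast
  qed
  then show "fps_X ^ nat (r + q + n) dvd (F * G) $$ n"
    unfolding fls_times_nth(2) by (intro dvd_sum)
qed

lemma weight_ge_power: "weight_ge F r \<Longrightarrow> weight_ge (F ^ k) (int k * r)"
proof (induction k)
  case 0
  then show ?case by (simp add: weight_ge_one)
next
  case (Suc k)
  then have "weight_ge (F * F ^ k) (r + int k * r)"
    using weight_ge_mult by blast
  then show ?case by (simp add: algebra_simps)
qed

lemma fls_times_nth_from:
  fixes F G :: "'a::comm_ring_1 fls"
  assumes "\<And>i. i < p \<Longrightarrow> F $$ i = 0" "\<And>i. i < q \<Longrightarrow> G $$ i = 0"
  shows "(F * G) $$ n = (\<Sum>i=p..n - q. F $$ i * G $$ (n - i))"
proof (cases "F = 0 \<or> G = 0")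
  case True
  then show ?thesis by auto
next
  case False
  then have "p \<le> fls_subdegree F" "q \<le> fls_subdegree G"
    using assms fls_subdegree_geI by blast+
  then have "(\<Sum>i=fls_subdegree F..n - fls_subdegree G. F $$ i * G $$ (n - i)) =
      (\<Sum>i=p..n - q. F $$ i * G $$ (n - i))"
    by (intro sum.mono_neutral_left) auto
  then show ?thesis
    by (simp add: fls_times_nth(2))
qed

lemma lowest_coeff_at_mult:
  fixes F G :: "'a::comm_ring_1 fls"
  assumes "lowest_coeff_at F d e" "lowest_coeff_at G d' e'"
  shows "lowest_coeff_at (F * G) (d + d') (e * e')"
proof -
  have "(F * G) $$ n = (\<Sum>i=d..n - d'. F $$ i * G $$ (n - i))" for n
    using assms by (intro fls_times_nth_from) (auto simp: lowest_coeff_at_def)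
  then show ?thesis
    using assms by (auto simp: lowest_coeff_at_def)
qed

lemma lowest_coeff_at_add:
  "lowest_coeff_at F d e \<Longrightarrow> lowest_coeff_at G d e' \<Longrightarrow> lowest_coeff_at (F + G) d (e + e')"
  by (simp add: lowest_coeff_at_def)

lemma lowest_coeff_at_sum:
  "(\<And>x. x \<in> A \<Longrightarrow> lowest_coeff_at (f x) d (g x)) \<Longrightarrow>
    lowest_coeff_at (\<Sum>x\<in>A. f x) d (\<Sum>x\<in>A. g x)"
  by (induction A rule: infinite_finite_induct) (auto simp: lowest_coeff_at_def)

lemma lowest_coeff_at_power:
  fixes F :: "'a::comm_ring_1 fls"
  shows "lowest_coeff_at F d e \<Longrightarrow> lowest_coeff_at (F ^ k) (int k * d) (e ^ k)"
proof (induction k)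
  case 0
  then show ?case by (simp add: lowest_coeff_at_def)
next
  case (Suc k)
  then have "lowest_coeff_at (F * F ^ k) (d + int k * d) (e * e ^ k)"
    using lowest_coeff_at_mult by blast
  then show ?case by (simp add: algebra_simps)
qed

lemma lowest_coeff_at_lower: "lowest_coeff_at F d e \<Longrightarrow> d' < d \<Longrightarrow> lowest_coeff_at F d' 0"
  by (simp add: lowest_coeff_at_def)

lemma lowest_coeff_at_const: "lowest_coeff_at (fls_const e) 0 e"
  by (simp add: lowest_coeff_at_def)

definition pow_diff_quot :: "nat \<Rightarrow> 'a::comm_ring_1 \<Rightarrow> 'a \<Rightarrow> 'a" where
  "pow_diff_quot n y z = (\<Sum>i<n. z ^ (n - Suc i) * y ^ i)"

definition monic_diff_quot :: "nat \<Rightarrow> (nat \<Rightarrow> cfps) \<Rightarrow> cfps fls \<Rightarrow> cfps fls \<Rightarrow> cfps fls" where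
  "monic_diff_quot a c y z =
     pow_diff_quot a y z + (\<Sum>k=2..a. fls_const (c k) * pow_diff_quot (a - k) y z)"

lemma monic_expr_diff: "monic_expr a c y - monic_expr a c z = (y - z) * monic_diff_quot a c y z"
proof -
  have "monic_expr a c y - monic_expr a c z =
      (y ^ a - z ^ a) + (\<Sum>k=2..a. fls_const (c k) * (y ^ (a - k) - z ^ (a - k)))"
    unfolding monic_expr_def by (simp add: sum_subtractf[symmetric] algebra_simps)
  also have "\<dots> = (y - z) * pow_diff_quot a y z +
      (\<Sum>k=2..a. fls_const (c k) * ((y - z) * pow_diff_quot (a - k) y z))"
    unfolding pow_diff_quot_def power_diff_sumr2[of y _ z] by simp
  also have "\<dots> = (y - z) * monic_diff_quot a c y z"
    unfolding monic_diff_quot_def by (simp add: algebra_simps sum_distrib_left)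
  finally show ?thesis .
qed

lemma weight_ge_pow_diff_quot:
  assumes "weight_ge y 1" "weight_ge z 1"
  shows "weight_ge (pow_diff_quot n y z) (int n - 1)"
  unfolding pow_diff_quot_def
proof (rule weight_ge_sum)
  fix i
  assume "i \<in> {..<n}"
  then have "int (n - Suc i) * 1 + int i * 1 = int n - 1"
    by auto
  then show "weight_ge (z ^ (n - Suc i) * y ^ i) (int n - 1)"
    using weight_ge_mult[OF weight_ge_power[OF assms(2)] weight_ge_power[OF assms(1)]] by metis
qed

lemma lowest_coeff_at_pow_diff_quot:
  fixes y z :: "'a::comm_ring_1 fls"
  assumes "lowest_coeff_at y (-1) 1" "lowest_coeff_at z (-1) 1"
  shows "lowest_coeff_at (pow_diff_quot n y z) (1 - int n) (of_nat n)"
proof -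
  have "lowest_coeff_at (pow_diff_quot n y z) (1 - int n) (\<Sum>i<n. 1)"
    unfolding pow_diff_quot_def
  proof (rule lowest_coeff_at_sum)
    fix i
    assume "i \<in> {..<n}"
    then have "int (n - Suc i) * -1 + int i * -1 = 1 - int n"
      by auto
    then show "lowest_coeff_at (z ^ (n - Suc i) * y ^ i) (1 - int n) 1"
      using lowest_coeff_at_mult[OF lowest_coeff_at_power[OF assms(2)]
          lowest_coeff_at_power[OF assms(1)]]
      by (metis power_one mult_1)
  qed
  then show ?thesis
    by simp
qed

lemma weight_ge_monic_diff_quot:
  assumes "weight_ge y 1" "weight_ge z 1" "\<And>k. 2 \<le> k \<Longrightarrow> k \<le> a \<Longrightarrow> fps_X ^ k dvd c k"
  shows "weight_ge (monic_diff_quot a c y z) (int a - 1)"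
  unfolding monic_diff_quot_def
proof (intro weight_ge_add weight_ge_pow_diff_quot assms(1,2) weight_ge_sum)
  fix k
  assume k: "k \<in> {2..a}"
  then have "weight_ge (fls_const (c k)) (int k)"
    using assms(3) by (intro weight_ge_const) auto
  from weight_ge_mult[OF this weight_ge_pow_diff_quot[OF assms(1,2), of "a - k"]] k
  show "weight_ge (fls_const (c k) * pow_diff_quot (a - k) y z) (int a - 1)"
    by (simp add: of_nat_diff)
qed

lemma lowest_coeff_at_monic_diff_quot:
  assumes "lowest_coeff_at y (-1) 1" "lowest_coeff_at z (-1) 1"
  shows "lowest_coeff_at (monic_diff_quot a c y z) (1 - int a) (of_nat a)"
proof -
  have "lowest_coeff_at (monic_diff_quot a c y z) (1 - int a) (of_nat a + (\<Sum>k\<in>{2..a}. 0))"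
    unfolding monic_diff_quot_def
  proof (intro lowest_coeff_at_add lowest_coeff_at_pow_diff_quot assms lowest_coeff_at_sum)
    fix k
    assume k: "k \<in> {2..a}"
    have "lowest_coeff_at (fls_const (c k) * pow_diff_quot (a - k) y z)
        (0 + (1 - int (a - k))) (c k * of_nat (a - k))"
      by (intro lowest_coeff_at_mult lowest_coeff_at_const lowest_coeff_at_pow_diff_quot assms)
    then show "lowest_coeff_at (fls_const (c k) * pow_diff_quot (a - k) y z) (1 - int a) 0"
      by (rule lowest_coeff_at_lower) (use k in auto)
  qed
  then show ?thesis
    by simp
qed

lemma weight_ge_monic_expr_diff:
  assumes "weight_ge y 1" "weight_ge z 1" "\<And>k. 2 \<le> k \<Longrightarrow> k \<le> a \<Longrightarrow> fps_X ^ k dvd c k"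
    and "weight_ge (y - z) r"
  shows "weight_ge (monic_expr a c y - monic_expr a c z) (r + (int a - 1))"
  unfolding monic_expr_diff
  by (intro weight_ge_mult weight_ge_monic_diff_quot assms)

lemma lowest_coeff_at_monic_expr_diff:
  assumes "lowest_coeff_at y (-1) 1" "lowest_coeff_at z (-1) 1" "lowest_coeff_at (y - z) k e"
  shows "lowest_coeff_at (monic_expr a c y - monic_expr a c z) (k + (1 - int a)) (e * of_nat a)"
  unfolding monic_expr_diff
  by (intro lowest_coeff_at_mult lowest_coeff_at_monic_diff_quot assms)

lemma X_power_dvd_mult_of_nat_cancel:
  fixes f :: "'a::field_char_0 fps"
  assumes "a \<noteq> 0" "fps_X ^ n dvd f * of_nat a"
  shows "fps_X ^ n dvd f"
  using assms by (simp add: dvd_mult_unit_iff)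

lemma weight_ge_sv: "weight_ge sv 1"
  unfolding sv_def by (rule weight_ge_X_inv)

lemma lowest_coeff_at_sv_add:
  "(\<And>n. n \<le> 0 \<Longrightarrow> w $$ n = 0) \<Longrightarrow> lowest_coeff_at (sv + w) (-1) 1"
  by (simp add: sv_def lowest_coeff_at_def)

lemma s_next_minus_sv_nth:
  "(s_next a \<delta>' \<epsilon> - sv) $$ n =
     (if a < nat (n + 1) \<and> 0 \<le> n + 1 then \<epsilon> (nat (n + 1)) else 0)
     - fps_const (1 / of_nat a) * (\<Sum>i=2..a. \<delta>' i * (if n = int (i - 1) then 1 else 0))"
  by (simp add: s_next_def tail_sum_def spow1m_def sv_def fls_nth_sum
      fls_X_inv_times_conv_shift sum_distrib_left)

lemma s_next_minus_sv_nth_nonpos: "0 < a \<Longrightarrow> n \<le> 0 \<Longrightarrow> (s_next a \<delta>' \<epsilon> - sv) $$ n = 0"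
  unfolding s_next_minus_sv_nth by (auto intro!: sum.neutral)

lemma s_next_minus_sv_nth_tail: "a < i \<Longrightarrow> (s_next a \<delta>' \<epsilon> - sv) $$ (int i - 1) = \<epsilon> i"
  unfolding s_next_minus_sv_nth by (auto intro!: sum.neutral)

lemma weight_ge_of_monic_expr_diff:
  fixes u :: "cfps fls" and M :: nat
  assumes a: "0 < a"
    and c: "\<And>k. 2 \<le> k \<Longrightarrow> k \<le> a \<Longrightarrow> fps_X ^ k dvd c k"
    and u_nonpos: "\<And>n. n \<le> 0 \<Longrightarrow> u $$ n = 0"
    and diff: "weight_ge (monic_expr a c (sv + u) - monic_expr a c sv) (int a + int M)"
  shows "weight_ge u (1 + int M)"
proof -
  have "fps_X ^ (1 + M + k) dvd u $$ int k" for k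
  proof (induction k rule: less_induct)
    case (less k)
    txt \<open>\<open>v\<close> is the part of \<open>u\<close> below \<open>s^(-k)\<close>; by induction it has weight \<open>1 + M\<close>, so
      \<open>P(s + u) - P(s + v)\<close> has weight \<open>a + M\<close>, and its lowest coefficient is \<open>a \<cdot> u $$ k\<close>.\<close>
    define v where "v = Abs_fls (\<lambda>n. if n < int k then u $$ n else 0)"
    have v_nth: "v $$ n = (if n < int k then u $$ n else 0)" for n
      unfolding v_def using u_nonpos by (intro nth_Abs_fls_lower_bound[of 1]) auto
    have "weight_ge v (1 + int M)"
      unfolding weight_ge_def
    proof
      fix n
      show "fps_X ^ nat (1 + int M + n) dvd v $$ n"
      proof (cases "0 < n \<and> n < int k")
        case True
        then have "nat n < k"
          by linarith
        with less.IH[of "nat n"] True show ?thesis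
          by (simp add: v_nth nat_add_distrib)
      qed (auto simp: v_nth u_nonpos)
    qed
    then have "weight_ge (monic_expr a c (sv + v) - monic_expr a c sv) (1 + int M + (int a - 1))"
      by (intro weight_ge_monic_expr_diff weight_ge_sv weight_ge_add c)
        (auto elim: weight_ge_mono)
    then have "weight_ge (monic_expr a c (sv + v) - monic_expr a c sv) (int a + int M)"
      by (simp add: ac_simps)
    with diff have "weight_ge ((monic_expr a c (sv + u) - monic_expr a c sv) -
        (monic_expr a c (sv + v) - monic_expr a c sv)) (int a + int M)"
      by (rule weight_ge_diff)
    then have E_weight: "weight_ge (monic_expr a c (sv + u) - monic_expr a c (sv + v)) (int a + int M)"
      by simp
    have "lowest_coeff_at (sv + v) (-1) 1"
      by (rule lowest_coeff_at_sv_add) (simp add: v_nth u_nonpos)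
    moreover have "lowest_coeff_at ((sv + u) - (sv + v)) (int k) (u $$ int k)"
      by (simp add: lowest_coeff_at_def v_nth)
    ultimately have E_lowest: "lowest_coeff_at (monic_expr a c (sv + u) - monic_expr a c (sv + v))
        (int k + (1 - int a)) (u $$ int k * of_nat a)"
      using lowest_coeff_at_sv_add[OF u_nonpos] by (intro lowest_coeff_at_monic_expr_diff)
    have "fps_X ^ nat (int a + int M + (int k + (1 - int a))) dvd
        (monic_expr a c (sv + u) - monic_expr a c (sv + v)) $$ (int k + (1 - int a))"
      using E_weight unfolding weight_ge_def by blast
    moreover have "nat (int a + int M + (int k + (1 - int a))) = 1 + M + k"
      by simp
    moreover have "(monic_expr a c (sv + u) - monic_expr a c (sv + v)) $$ (int k + (1 - int a)) =
        u $$ int k * of_nat a"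
      using E_lowest unfolding lowest_coeff_at_def by blast
    ultimately have "fps_X ^ (1 + M + k) dvd u $$ int k * of_nat a"
      by (simp only:)
    then show ?case
      by (rule X_power_dvd_mult_of_nat_cancel[rotated]) (use a in simp)
  qed
  note coeff_dvd = this
  show ?thesis
    unfolding weight_ge_def
  proof
    fix n
    show "fps_X ^ nat (1 + int M + n) dvd u $$ n"
    proof (cases "n \<le> 0")
      case False
      with coeff_dvd[of "nat n"] show ?thesis
        by (simp add: nat_add_distrib)
    qed (simp add: u_nonpos)
  qed
qed

lemma monic_expr_add_coeffs:
  "monic_expr a (\<lambda>k. c k + d k) x = monic_expr a c x + (\<Sum>k=2..a. fls_const (d k) * x ^ (a - k))"
  unfolding monic_expr_def by (simp add: fls_plus_const[symmetric] distrib_right sum.distrib)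

lemma tail_coeff_dvd:
  fixes M :: nat
  assumes a: "0 < a"
    and c: "\<And>k. 2 \<le> k \<Longrightarrow> k \<le> a \<Longrightarrow> fps_X ^ k dvd c k"
    and \<delta>: "\<And>k. 2 \<le> k \<Longrightarrow> k \<le> a \<Longrightarrow> fps_X ^ (k + M) dvd \<delta> k"
    and eq: "monic_expr a (\<lambda>k. c k + \<delta> k) (s_next a \<delta>' \<epsilon>) = monic_expr a c sv"
    and i: "a < i"
  shows "fps_X ^ (i + M) dvd \<epsilon> i"
proof -
  define u where "u = s_next a \<delta>' \<epsilon> - sv"
  define D where "D = (\<Sum>k=2..a. fls_const (\<delta> k) * sv ^ (a - k))"
  have "weight_ge D (int a + int M)"
    unfolding D_def
  proof (rule weight_ge_sum)
    fix k
    assume k: "k \<in> {2..a}"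
    then have "weight_ge (fls_const (\<delta> k)) (int k + int M)"
      using \<delta> by (intro weight_ge_const) (auto simp: nat_add_distrib)
    from weight_ge_mult[OF this weight_ge_power[OF weight_ge_sv, of "a - k"]] k
    show "weight_ge (fls_const (\<delta> k) * sv ^ (a - k)) (int a + int M)"
      by (simp add: of_nat_diff add.commute)
  qed
  moreover have "monic_expr a (\<lambda>k. c k + \<delta> k) (sv + u) - monic_expr a (\<lambda>k. c k + \<delta> k) sv = - D"
    using eq by (simp add: u_def D_def monic_expr_add_coeffs)
  ultimately have diff: "weight_ge (monic_expr a (\<lambda>k. c k + \<delta> k) (sv + u) -
      monic_expr a (\<lambda>k. c k + \<delta> k) sv) (int a + int M)"
    by (simp add: weight_ge_uminus)
  have c\<delta>: "fps_X ^ k dvd c k + \<delta> k" if "2 \<le> k" "k \<le> a" for k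
  proof (rule dvd_add)
    have "fps_X ^ k dvd (fps_X ^ (k + M) :: cfps)"
      by (rule le_imp_power_dvd) simp
    then show "fps_X ^ k dvd \<delta> k"
      using \<delta>[OF that] by (rule dvd_trans)
  qed (rule c[OF that])
  have "u $$ n = 0" if "n \<le> 0" for n
    unfolding u_def using a that by (rule s_next_minus_sv_nth_nonpos)
  from a c\<delta> this diff have "weight_ge u (1 + int M)"
    by (rule weight_ge_of_monic_expr_diff)
  then have "fps_X ^ nat (1 + int M + (int i - 1)) dvd u $$ (int i - 1)"
    unfolding weight_ge_def by blast
  moreover have "u $$ (int i - 1) = \<epsilon> i"
    unfolding u_def using i by (rule s_next_minus_sv_nth_tail)
  moreover have "nat (1 + int M + (int i - 1)) = i + M"
    using i by simp
  ultimately show ?thesis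
    by simp
qed

lemma X_power_dvd_iff_ord: "fps_X ^ n dvd f \<longleftrightarrow> enat n \<le> ord f"
proof (cases "f = 0")
  case False
  then show ?thesis
    by (simp add: ord_def fps_dvd_iff fps_X_power_subdegree)
qed (simp add: ord_def)

lemma enat_add_le_of_le_diff: "enat j \<le> x \<Longrightarrow> enat m \<le> x - enat j \<Longrightarrow> enat (j + m) \<le> x"
  by (cases x) auto

lemma enat_add_le_of_forall_le:
  assumes "\<And>m. enat m \<le> y \<Longrightarrow> enat (i + m) \<le> x"
  shows "enat i + y \<le> x"
proof (cases y)
  case (enat m)
  then show ?thesis
    using assms[of m] by simp
next
  case infinity
  then have "enat (i + m) \<le> x" for m
    using assms by simp
  then show ?thesis
  proof (cases x)
    case (enat n)
    with \<open>enat (i + Suc n) \<le> x\<close> show ?thesis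
      by simp
  qed simp
qed

theorem mainTheorem8:
  fixes a :: nat and c \<delta> \<delta>' \<epsilon> :: "nat \<Rightarrow> complex fps"
  assumes ha: "a \<ge> 2"
    and hc: "\<And>i. 2 \<le> i \<Longrightarrow> i \<le> a \<Longrightarrow> fps_X ^ i dvd c i"
    and hd: "\<And>i. 2 \<le> i \<Longrightarrow> i \<le> a \<Longrightarrow> fps_X ^ (i + 1) dvd \<delta> i"
    and heq: "monic_expr a (\<lambda>k. c k + \<delta> k) (s_next a \<delta>' \<epsilon>) = monic_expr a c sv"
  shows "\<forall>i > a. ord (\<epsilon> i) \<ge> enat i + Min ((\<lambda>j. ord (\<delta> j) - enat j) ` {2..a})"
proof (intro allI impI)
  fix i
  assume i: "a < i"
  let ?m = "Min ((\<lambda>j. ord (\<delta> j) - enat j) ` {2..a})"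
  have "enat (i + M) \<le> ord (\<epsilon> i)" if M: "enat M \<le> ?m" for M
  proof -
    have \<delta>_dvd: "fps_X ^ (j + M) dvd \<delta> j" if j: "2 \<le> j" "j \<le> a" for j
    proof -
      have "?m \<le> ord (\<delta> j) - enat j"
        using j by (intro Min_le) auto
      with M have "enat M \<le> ord (\<delta> j) - enat j"
        by (rule order_trans)
      txt \<open>\<open>hd\<close> makes the truncated subtraction \<open>ord (\<delta> j) - enat j\<close> exact.\<close>
      moreover have "fps_X ^ j dvd \<delta> j"
        by (rule dvd_trans[OF le_imp_power_dvd[OF le_add1] hd[OF j]])
      then have "enat j \<le> ord (\<delta> j)"
        by (simp add: X_power_dvd_iff_ord)
      ultimately show ?thesis
        by (simp add: X_power_dvd_iff_ord enat_add_le_of_le_diff)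
    qed
    have "0 < a"
      using ha by simp
    then have "fps_X ^ (i + M) dvd \<epsilon> i"
      using hc \<delta>_dvd heq i by (rule tail_coeff_dvd)
    then show ?thesis
      by (simp add: X_power_dvd_iff_ord)
  qed
  then show "enat i + ?m \<le> ord (\<epsilon> i)"
    by (rule enat_add_le_of_forall_le)
qed

end
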